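(* Let $\mathcal{C}\subset\mathcal{V}$ be a nonempty closed convex set and let $x\in\mathcal{C}$. Then \[ P_V\,N^K_{\mathcal{C}}(x)=N^{S_V}_{P_V\mathcal{C}}(P_Vx), \] where $S_V=V^TKV$.
   Context: $n,m,d,q$ are positive integers. $Q$ is an $n\times m$ matrix with entries in $\{0,1,-1\}$, each column having exactly one $1$ and one $-1$, other entries $0$. $\xi_0\in\mathbb{R}^{nd}$ lists node coordinates, with the endpoints of each spring distinct. $\varphi:\mathbb{R}^{nd}\to\mathbb{R}^m$, $\varphi_i(\xi)=\sqrt{\sum_{k=1}^d(\sum_{j}Q_{ji}\xi_{d(j-1)+k})^2}$, and $D_{\xi_0}\varphi$ is its $m\times nd$ Jacobian at $\xi_0$. $R$ is a $q\times nd$ matrix with $\mathrm{rank}\,R=q$, and $\mathrm{Ker}\,(D_{\xi_0}\varphi)\cap\mathrm{Ker}\,R=\{0\}$; also $m-nd+q>0$. $K=\mathrm{diag}(k_1,\dots,k_m)$ with all $k_i>0$. $\mathcal{U}=\{(D_{\xi_0}\varphi)\zeta:R\zeta=0\}$ and $\mathcal{V}=\{K^{-1}\sigma:(D_{\xi_0}\varphi)^T\sigma\in\mathrm{Im}\,R^T\}$ are subspaces of $\mathbb{R}^m$ (they are complementary and orthogonal w.r.t. $(x,y)\mapsto x^TKy$). $U$, $V$ are matrices whose columns form bases of $\mathcal U$, $\mathcal V$ respectively; $P_U=(U^TKU)^{-1}U^TK$, $P_V=(V^TKV)^{-1}V^TK$. For a nonempty closed convex set $\mathcal{D}\subset\mathbb{R}^N$,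 a point $z\in\mathcal D$ and a symmetric positive definite $N\times N$ matrix $S$, $N^S_{\mathcal D}(z)=\{w\in\mathbb{R}^N:w^TS(c-z)\le0\ \forall c\in\mathcal D\}$. $P_V N^K_{\mathcal C}(x)$ denotes the image of the set under the linear map $P_V$, and $P_V\mathcal C$ likewise. *)

theory Defs
  imports "HOL-Analysis.Analysis"
begin

text \<open>Node coordinates live in real^('n \<times> 'd): entry (j,k) is the k-th coordinate of node j
  (this is the paper's coordinate xi_{d(j-1)+k}). Springs are indexed by 'm.\<close>

definition incidence_matrix :: "real^'m^'n \<Rightarrow> bool" where
  "incidence_matrix Q \<longleftrightarrow>
     (\<forall>j i. Q$j$i \<in> {0, 1, -1}) \<and>
     (\<forall>i. card {j. Q$j$i = 1} = 1 \<and> card {j. Q$j$i = -1} = 1)"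

definition distinct_endpoints :: "real^'m^'n \<Rightarrow> real^('n::finite \<times> 'd::finite) \<Rightarrow> bool" where
  "distinct_endpoints Q xi \<longleftrightarrow>
     (\<forall>i j1 j2. Q$j1$i = 1 \<and> Q$j2$i = -1 \<longrightarrow> (\<exists>k. xi$(j1,k) \<noteq> xi$(j2,k)))"

definition spring_length :: "real^'m^'n \<Rightarrow> real^('n::finite \<times> 'd::finite) \<Rightarrow> real^'m" where
  "spring_length Q xi = (\<chi> i. sqrt (\<Sum>k\<in>UNIV. (\<Sum>j\<in>UNIV. Q$j$i * xi$(j,k))^2))"

definition jacobian :: "(real^'a \<Rightarrow> real^'b) \<Rightarrow> real^'a \<Rightarrow> real^'a^'b" where
  "jacobian f x0 = matrix (frechet_derivative f (at x0))"

definition Ucal :: "real^'a^'m \<Rightarrow> real^'a^'q \<Rightarrow> (real^'m) set" where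
  "Ucal D R = {D *v z | z. R *v z = 0}"

definition Vcal :: "real^'a^'m \<Rightarrow> real^'a^'q \<Rightarrow> real^'m^'m \<Rightarrow> (real^'m) set" where
  "Vcal D R K = {matrix_inv K *v s | s. transpose D *v s \<in> range (\<lambda>y. transpose R *v y)}"

definition proj_V :: "real^'r^'m \<Rightarrow> real^'m^'m \<Rightarrow> real^'m^'r" where
  "proj_V V K = matrix_inv (transpose V ** K ** V) ** transpose V ** K"

definition normal_cone :: "real^'N^'N \<Rightarrow> (real^'N) set \<Rightarrow> real^'N \<Rightarrow> (real^'N) set" where
  "normal_cone S D z = {w. \<forall>c\<in>D. w \<bullet> (S *v (c - z)) \<le> 0}"

end

theory Submission
  imports Defs
begin

text \<open>With \<open>S = V\<^sup>T K V\<close> and \<open>P = S\<^sup>-\<^sup>1 V\<^sup>T K\<close> one has \<open>P V = I\<close> and, for symmetric \<open>K\<close>,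
  \<open>(P w)\<^sup>T S d = w\<^sup>T K (V d)\<close>. Since \<open>C\<close> lies in the range of \<open>V\<close>, every difference \<open>c - x\<close> with
  \<open>c \<in> C\<close> equals \<open>V (P c - P x)\<close>, so the normal-cone inequality for \<open>w\<close> at \<open>x\<close> is the same as
  the one for \<open>P w\<close> at \<open>P x\<close>. This gives one inclusion; for the other, a normal vector \<open>u\<close> of
  \<open>P C\<close> lifts to the normal vector \<open>V u\<close> of \<open>C\<close>, and \<open>P (V u) = u\<close>.\<close>

declare transpose_matrix_vector[simp del]

lemma inner_transpose_matrix_vector: "(u::real^'n) \<bullet> (transpose A *v y) = (A *v u) \<bullet> y"
  by (metis dot_lmul_matrix inner_commute transpose_matrix_vector vector_transpose_matrix
      transpose_transpose)

lemma matrix_inv_left_right: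
  fixes A :: "'a::field^'n^'n"
  assumes "invertible A"
  shows "A ** matrix_inv A = mat 1 \<and> matrix_inv A ** A = mat 1"
  using assms unfolding invertible_def matrix_inv_def by (rule someI_ex)

lemma transpose_diagonal_matrix:
  "transpose (\<chi> i j. if i = j then k i else 0) = (\<chi> i j. if i = j then k i else (0::'a::semiring_1))"
  by (simp add: transpose_def vec_eq_iff)

lemma diagonal_matrix_vector_mult:
  "(\<chi> i j. if i = j then k i else 0) *v y = (\<chi> i. k i * y $ i :: 'a::semiring_1^'n)"
  by (simp add: matrix_vector_mult_def vec_eq_iff if_distrib[where f="\<lambda>z. z * _"] sum.delta
      cong: if_cong)

lemma diagonal_matrix_pos_definite:
  fixes y :: "real^'n"
  assumes "\<forall>i. k i > 0" and "y \<noteq> 0"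
  shows "y \<bullet> ((\<chi> i j. if i = j then k i else 0) *v y) > 0"
proof -
  obtain i where "y $ i \<noteq> 0" using \<open>y \<noteq> 0\<close> by (auto simp: vec_eq_iff)
  have "y \<bullet> ((\<chi> i j. if i = j then k i else 0) *v y) = (\<Sum>j\<in>UNIV. k j * (y $ j)\<^sup>2)"
    by (simp add: diagonal_matrix_vector_mult inner_vec_def power2_eq_square mult_ac)
  also have "\<dots> > 0"
    using assms(1) \<open>y $ i \<noteq> 0\<close>
    by (intro sum_pos2[where i=i]) (simp_all add: less_imp_le)
  finally show ?thesis .
qed

lemma invertible_congruence_pos_definite:
  fixes K :: "real^'m^'m" and V :: "real^'r^'m"
  assumes "\<And>y. y \<noteq> 0 \<Longrightarrow> y \<bullet> (K *v y) > 0" and "\<And>c. V *v c = 0 \<Longrightarrow> c = 0"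
  shows "invertible (transpose V ** K ** V)"
proof -
  have "u = 0" if "(transpose V ** K ** V) *v u = 0" for u
  proof -
    have "(V *v u) \<bullet> (K *v (V *v u)) = u \<bullet> ((transpose V ** K ** V) *v u)"
      by (simp add: matrix_vector_mul_assoc[symmetric] inner_transpose_matrix_vector)
    then have "V *v u = 0" using that assms(1) by fastforce
    then show "u = 0" using assms(2) by blast
  qed
  then show ?thesis
    using matrix_left_invertible_ker invertible_left_inverse by blast
qed

context
  fixes K :: "real^'m^'m" and V :: "real^'r^'m"
  assumes gram_invertible: "invertible (transpose V ** K ** V)"
begin

lemma proj_V_left_inverse: "proj_V V K ** V = mat 1"
  using matrix_inv_left_right[OF gram_invertible]
  by (simp add: proj_V_def matrix_mul_assoc)

lemma gram_matrix_mult_proj_V: "(transpose V ** K ** V) ** proj_V V K = transpose V ** K"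
  using matrix_inv_left_right[OF gram_invertible]
  by (metis proj_V_def matrix_mul_assoc matrix_mul_lid)

lemma proj_V_matrix_vector_left_inverse: "proj_V V K *v (V *v u) = u"
  by (simp add: matrix_vector_mul_assoc proj_V_left_inverse)

lemma inner_proj_V_gram_matrix:
  assumes "transpose K = K"
  shows "(proj_V V K *v w) \<bullet> ((transpose V ** K ** V) *v d) = w \<bullet> (K *v (V *v d))"
proof -
  let ?S = "transpose V ** K ** V"
  have "transpose ?S = ?S"
    by (simp add: matrix_transpose_mul assms matrix_mul_assoc)
  then have "(proj_V V K *v w) \<bullet> (?S *v d) = d \<bullet> ((?S ** proj_V V K) *v w)"
    by (metis inner_commute inner_transpose_matrix_vector matrix_vector_mul_assoc)
  also have "\<dots> = (V *v d) \<bullet> (K *v w)"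
    by (simp add: gram_matrix_mult_proj_V matrix_vector_mul_assoc[symmetric]
        inner_transpose_matrix_vector)
  finally show ?thesis
    by (metis assms inner_commute inner_transpose_matrix_vector)
qed

theorem proj_V_image_normal_cone:
  assumes "transpose K = K" and "C \<subseteq> range (\<lambda>c. V *v c)" and "x \<in> C"
  shows "(\<lambda>w. proj_V V K *v w) ` normal_cone K C x
         = normal_cone (transpose V ** K ** V) ((\<lambda>c. proj_V V K *v c) ` C) (proj_V V K *v x)"
    (is "?P ` _ = normal_cone ?S _ _")
proof -
  have diff: "c - x = V *v (?P c - ?P x)" if c: "c \<in> C" for c
  proof -
    obtain a b where "c = V *v a" and "x = V *v b"
      using assms(2,3) c by blast
    then show ?thesis
      by (simp add: proj_V_matrix_vector_left_inverse matrix_vector_mult_diff_distrib)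
  qed
  have inner_eq: "?P w \<bullet> (?S *v (?P c - ?P x)) = w \<bullet> (K *v (c - x))" if "c \<in> C" for w c
    by (simp add: inner_proj_V_gram_matrix[OF assms(1)] diff[OF that])
  show ?thesis
  proof
    show "?P ` normal_cone K C x \<subseteq> normal_cone ?S (?P ` C) (?P x)"
      unfolding normal_cone_def using inner_eq by (simp add: image_subset_iff)
  next
    show "normal_cone ?S (?P ` C) (?P x) \<subseteq> ?P ` normal_cone K C x"
    proof
      fix u assume u: "u \<in> normal_cone ?S (?P ` C) (?P x)"
      have "V *v u \<in> normal_cone K C x"
        using u inner_eq[of _ "V *v u"]
        by (simp add: normal_cone_def proj_V_matrix_vector_left_inverse)
      then show "u \<in> ?P ` normal_cone K C x"
        by (metis image_eqI proj_V_matrix_vector_left_inverse)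
    qed
  qed
qed

end

theorem lemma1:
  fixes Q :: "real^'m^'n"
    and xi0 :: "real^('n::finite \<times> 'd::finite)"
    and R :: "real^('n \<times> 'd)^'q"
    and k :: "'m \<Rightarrow> real"
    and K :: "real^'m^'m"
    and V :: "real^'r^'m"
    and C :: "(real^'m) set"
    and x :: "real^'m"
  assumes "incidence_matrix Q"
    and "distinct_endpoints Q xi0"
    and "rank R = CARD('q)"
    and "{z. jacobian (spring_length Q) xi0 *v z = 0} \<inter> {z. R *v z = 0} = {0}"
    and "CARD('m) + CARD('q) > CARD('n) * CARD('d)"
    and "\<forall>i. k i > 0"
    and "K = (\<chi> i j. if i = j then k i else 0)"
    and "\<forall>c. V *v c = 0 \<longrightarrow> c = 0"
    and "range (\<lambda>c. V *v c) = Vcal (jacobian (spring_length Q) xi0) R K"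
    and "C \<subseteq> Vcal (jacobian (spring_length Q) xi0) R K"
    and "C \<noteq> {}" and "closed C" and "convex C"
    and "x \<in> C"
  shows "(\<lambda>w. proj_V V K *v w) ` normal_cone K C x
         = normal_cone (transpose V ** K ** V) ((\<lambda>c. proj_V V K *v c) ` C) (proj_V V K *v x)"
proof -
  have K_symmetric: "transpose K = K"
    unfolding assms(7) by (rule transpose_diagonal_matrix)
  have K_pos_definite: "y \<bullet> (K *v y) > 0" if "y \<noteq> 0" for y
    unfolding assms(7) using assms(6) that by (rule diagonal_matrix_pos_definite)
  have gram_invertible: "invertible (transpose V ** K ** V)"
    using K_pos_definite assms(8) by (blast intro: invertible_congruence_pos_definite)
  have "C \<subseteq> range (\<lambda>c. V *v c)"
    using assms(9,10) by simp
  then show ?thesis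
    using proj_V_image_normal_cone[OF gram_invertible K_symmetric] assms(14) by blast
qed

end
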